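(* Let $c \ge 1$, let $\{(x_i,y_i)\}_{i=1}^n$ be a data set with $x_i \in \mathbb{R}^m$ and each $y_i \in \{e_1,\dots,e_c\}\subset\mathbb{R}^c$ a one-hot vector. Fix a tree structure, i.e. a finite family of leaves $\ell$ with membership functions $\mu_\ell:\mathbb{R}^m\to\{0,1\}$ such that each $x_i$ has $\mu_\ell(x_i)=1$ for exactly one leaf $\ell$. Let $\mathcal{L}:\mathbb{R}^c\times\mathbb{R}^c\to\mathbb{R}$ be a loss function such that for every leaf $\ell$ containing at least one data point, the weighted mean $v_\ell=\sum_{i=1}^n \mu_\ell(x_i)y_i\big/\sum_{i=1}^n\mu_\ell(x_i)$ minimizes $v\mapsto \sum_{i=1}^n \mu_\ell(x_i)\mathcal{L}(y_i,v)$ over $v\in\mathbb{R}^c$. Let $T\in[0,1]^{c\times c}$ be an invertible noise transition matrix and define the forward-corrected loss $\mathcal{L}_T(y,\hat y)=\mathcal{L}(y,T\hat y)$. Then for each such leaf $\ell$, $T^{-1}v_\ell$ minimizes $v\mapsto\sum_{i=1}^n\mu_\ell(x_i)\mathcal{L}_T(y_i,v)$, and the minimal total loss of the tree structure is unchanged by forward correction: $$\sum_\ell \min_{v\in\mathbb{R}^c}\sum_{i=1}^n \mu_\ell(x_i)\mathcal{L}_T(y_i,v)=\sum_\ell \min_{v\in\mathbb{R}^c}\sum_{i=1}^n \mu_\ell(x_i)\mathcal{L}(y_i,v).$$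
   Context: Here $e_k\in\mathbb{R}^c$ denotes the standard basis (one-hot) vector with a $1$ in coordinate $k$. A decision tree with a fixed structure predicts for $x$ the value $v_\ell$ of the unique leaf $\ell$ with $\mu_\ell(x)=1$; the total loss of the tree is $\sum_\ell\sum_{i=1}^n\mu_\ell(x_i)\mathcal{L}(y_i,v_\ell)$. The transition matrix has entries $T_{a,b}=P(\tilde Y=b\mid Y=a)$, relating true labels $Y$ to observed noisy labels $\tilde Y$. *)

theory Defs
  imports "HOL-Analysis.Analysis"
begin

definition one_hot :: "'c::finite \<Rightarrow> real^'c" where
  "one_hot k = axis k 1"

definition leaf_loss ::
  "(real^'c \<Rightarrow> real^'c \<Rightarrow> real) \<Rightarrow> (real^'m \<Rightarrow> real) \<Rightarrow> (nat \<Rightarrow> real^'m) \<Rightarrow> (nat \<Rightarrow> real^'c) \<Rightarrow> nat \<Rightarrow> real^'c \<Rightarrow> real"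
  where "leaf_loss L mu x y n v = (\<Sum>i=1..n. mu (x i) * L (y i) v)"

definition leaf_mean ::
  "(real^'m \<Rightarrow> real) \<Rightarrow> (nat \<Rightarrow> real^'m) \<Rightarrow> (nat \<Rightarrow> real^'c) \<Rightarrow> nat \<Rightarrow> real^'c"
  where "leaf_mean mu x y n = (\<Sum>i=1..n. mu (x i) *\<^sub>R y i) /\<^sub>R (\<Sum>i=1..n. mu (x i))"

definition forward_loss ::
  "(real^'c \<Rightarrow> real^'c \<Rightarrow> real) \<Rightarrow> real^'c^'c \<Rightarrow> real^'c \<Rightarrow> real^'c \<Rightarrow> real"
  where "forward_loss L T y yh = L y (T *v yh)"

end

theory Submission
  imports Defs
begin

text \<open>Forward correction only reparametrizes each leaf objective by the bijection \<open>v \<mapsto> T v\<close>: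
  \<open>\<Sum>\<^sub>i \<mu>(x\<^sub>i) L\<^sub>T(y\<^sub>i, v) = \<Sum>\<^sub>i \<mu>(x\<^sub>i) L(y\<^sub>i, T v)\<close>. Hence \<open>T\<^sup>-\<^sup>1 v\<^sub>l\<close> minimizes the corrected
  objective exactly when \<open>v\<^sub>l\<close> minimizes the original one, and the infimum of each leaf
  objective is unchanged. Neither the one-hot labels, the partition property, nor the
  entries of \<open>T\<close> lying in \<open>[0, 1]\<close> are needed.\<close>

lemma matrix_inv_right:
  fixes A :: "'a::semiring_1^'n^'m"
  assumes "invertible A"
  shows "A ** matrix_inv A = mat 1"
proof -
  have "A ** matrix_inv A = mat 1 \<and> matrix_inv A ** A = mat 1"
    using assms unfolding invertible_def matrix_inv_def by (rule someI_ex)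
  then show ?thesis ..
qed

lemma matrix_vector_mul_matrix_inv:
  fixes A :: "'a::comm_semiring_1^'n^'m"
  assumes "invertible A"
  shows "A *v (matrix_inv A *v w) = w"
  by (simp add: matrix_vector_mul_assoc matrix_inv_right[OF assms])

lemma surj_matrix_vector_mult:
  fixes A :: "'a::comm_semiring_1^'n^'m"
  assumes "invertible A"
  shows "surj ((*v) A)"
  by (metis surjI matrix_vector_mul_matrix_inv[OF assms])

lemma INF_surj_comp:
  assumes "surj g"
  shows "(INF x. f (g x)) = (INF y. f y)"
  by (metis assms image_image)

lemma leaf_loss_forward_loss:
  "leaf_loss (forward_loss L T) mu x y n v = leaf_loss L mu x y n (T *v v)"
  by (simp add: leaf_loss_def forward_loss_def)

lemma forward_leaf_loss_minimizer:
  assumes "invertible T"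
    and "\<forall>v. leaf_loss L mu x y n w \<le> leaf_loss L mu x y n v"
  shows "leaf_loss (forward_loss L T) mu x y n (matrix_inv T *v w)
           \<le> leaf_loss (forward_loss L T) mu x y n v"
  using assms(2) by (simp add: leaf_loss_forward_loss matrix_vector_mul_matrix_inv[OF assms(1)])

lemma forward_leaf_loss_INF:
  assumes "invertible T"
  shows "(INF v. leaf_loss (forward_loss L T) mu x y n v) = (INF v. leaf_loss L mu x y n v)"
  unfolding leaf_loss_forward_loss
  by (rule INF_surj_comp[OF surj_matrix_vector_mult[OF assms]])

theorem theorem1:
  fixes x :: "nat \<Rightarrow> real^'m::finite"
    and y :: "nat \<Rightarrow> real^'c::finite"
    and n :: nat
    and Leaves :: "'l set"
    and mu :: "'l \<Rightarrow> real^'m \<Rightarrow> real"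
    and L :: "real^'c \<Rightarrow> real^'c \<Rightarrow> real"
    and T :: "real^'c^'c"
  assumes onehot: "\<forall>i\<in>{1..n}. \<exists>k. y i = one_hot k"
    and fin: "finite Leaves"
    and mu01: "\<forall>l\<in>Leaves. \<forall>z. mu l z \<in> {0, 1}"
    and partition: "\<forall>i\<in>{1..n}. \<exists>!l. l \<in> Leaves \<and> mu l (x i) = 1"
    and mean_min: "\<forall>l\<in>Leaves. (\<exists>i\<in>{1..n}. mu l (x i) = 1) \<longrightarrow>
          (\<forall>v. leaf_loss L (mu l) x y n (leaf_mean (mu l) x y n) \<le> leaf_loss L (mu l) x y n v)"
    and T01: "\<forall>a b. T $ a $ b \<in> {0..1}"
    and Tinv: "invertible T"
  shows "(\<forall>l\<in>Leaves. (\<exists>i\<in>{1..n}. mu l (x i) = 1) \<longrightarrow>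
            (\<forall>v. leaf_loss (forward_loss L T) (mu l) x y n (matrix_inv T *v leaf_mean (mu l) x y n)
                 \<le> leaf_loss (forward_loss L T) (mu l) x y n v))
       \<and> (\<Sum>l\<in>Leaves. INF v. leaf_loss (forward_loss L T) (mu l) x y n v)
         = (\<Sum>l\<in>Leaves. INF v. leaf_loss L (mu l) x y n v)"
proof (intro conjI ballI impI allI)
  fix l v
  assume "l \<in> Leaves" and "\<exists>i\<in>{1..n}. mu l (x i) = 1"
  with mean_min show "leaf_loss (forward_loss L T) (mu l) x y n (matrix_inv T *v leaf_mean (mu l) x y n)
      \<le> leaf_loss (forward_loss L T) (mu l) x y n v"
    by (blast intro: forward_leaf_loss_minimizer[OF Tinv])
next
  show "(\<Sum>l\<in>Leaves. INF v. leaf_loss (forward_loss L T) (mu l) x y n v)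
      = (\<Sum>l\<in>Leaves. INF v. leaf_loss L (mu l) x y n v)"
    by (simp add: forward_leaf_loss_INF[OF Tinv])
qed

end
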